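(* Let $G$ be a digraph with a fixed upward planar drawing, let $s,t\in V(G)$ and let $P$ be a directed path from $s$ to $t$ in $G$. If $P'$ is a directed $s$-$t$ path with $P'\cap\mathrm{Right}(P)\neq\emptyset$, then there is a directed $s$-$t$ path $Q$ such that $Q\subseteq P\cup\mathrm{Right}(P)$ and $Q\cap\mathrm{Right}(P)\neq\emptyset$.
   Context: An upward planar drawing of a digraph is a plane drawing (no edge crossings) in which every directed edge is a curve monotone increasing in the $y$-direction from tail to head. A path is identified with the set of points of $\mathbb{R}^2$ in its drawing. For a path $P$ with endpoints $(x,y)$, $(x',y')$, $y\le y'$, let $\mathrm{Right}(P):=\{(u,v)\in\mathbb{R}^2: y\le v\le y',\ u'<u \text{ for all } u' \text{ with } (u',v)\in P\}$. *)

theory Defs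
  imports "HOL-Analysis.Analysis"
begin

text \<open>A drawing assigns to each vertex a point
of the plane (real \<times> real, second coordinate = y) and to each edge a curve
(an arc, i.e. an injective continuous map on [0,1]).\<close>

definition digraph :: "'v set \<Rightarrow> ('v \<times> 'v) set \<Rightarrow> bool" where
  "digraph V E \<longleftrightarrow> finite V \<and> E \<subseteq> V \<times> V"

definition upward_planar_drawing ::
  "'v set \<Rightarrow> ('v \<times> 'v) set \<Rightarrow> ('v \<Rightarrow> real \<times> real)
     \<Rightarrow> ('v \<times> 'v \<Rightarrow> real \<Rightarrow> real \<times> real) \<Rightarrow> bool" where
  "upward_planar_drawing V E pos \<gamma> \<longleftrightarrow>
     inj_on pos V \<and>
     (\<forall>e\<in>E. arc (\<gamma> e) \<and> pathstart (\<gamma> e) = pos (fst e) \<and> pathfinish (\<gamma> e) = pos (snd e)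
        \<and> strict_mono_on {0..1} (\<lambda>r. snd (\<gamma> e r))) \<and>
     (\<forall>e\<in>E. \<forall>w\<in>V. pos w \<in> path_image (\<gamma> e) \<longrightarrow> w = fst e \<or> w = snd e) \<and>
     (\<forall>e1\<in>E. \<forall>e2\<in>E. e1 \<noteq> e2 \<longrightarrow>
        path_image (\<gamma> e1) \<inter> path_image (\<gamma> e2) \<subseteq> pos ` ({fst e1, snd e1} \<inter> {fst e2, snd e2}))"

definition dipath :: "'v set \<Rightarrow> ('v \<times> 'v) set \<Rightarrow> 'v \<Rightarrow> 'v \<Rightarrow> 'v list \<Rightarrow> bool" where
  "dipath V E s t ps \<longleftrightarrow> ps \<noteq> [] \<and> hd ps = s \<and> last ps = t \<and> distinct ps \<and>
     set ps \<subseteq> V \<and> (\<forall>i. Suc i < length ps \<longrightarrow> (ps ! i, ps ! Suc i) \<in> E)"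

definition path_points ::
  "('v \<Rightarrow> real \<times> real) \<Rightarrow> ('v \<times> 'v \<Rightarrow> real \<Rightarrow> real \<times> real) \<Rightarrow> 'v list \<Rightarrow> (real \<times> real) set" where
  "path_points pos \<gamma> ps = pos ` set ps \<union>
     (\<Union>i\<in>{i. Suc i < length ps}. path_image (\<gamma> (ps ! i, ps ! Suc i)))"

text \<open>Right(P) for a point set P with endpoints a, b where snd a \<le> snd b.\<close>

definition Right :: "(real \<times> real) set \<Rightarrow> real \<times> real \<Rightarrow> real \<times> real \<Rightarrow> (real \<times> real) set" where
  "Right P a b = {(u, v). snd a \<le> v \<and> v \<le> snd b \<and> (\<forall>u'. (u', v) \<in> P \<longrightarrow> u' < u)}"

end

theory Submission
  imports Defs
begin

text \<open>The drawing of P is a curve from s to t whose height increases strictly, so inside the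
  horizontal strip between s and t it is the graph of a continuous function of the height, and a
  connected subset of the strip avoiding P lies entirely on one side of it. By planarity an edge
  not on P meets P at most in its endpoints; hence all of its points off P lie on the same side,
  and this side is passed on through every vertex off P. Take an edge of P' reaching into
  Right(P) and extend it along P' in both directions to the maximal subpath whose inner vertices
  avoid P. This subpath lies in P \<union> Right(P), its ends are vertices of P, and since heights
  increase along directed paths its first end precedes its last one on P. Replacing the part of
  P between them by the subpath gives Q.\<close>

section \<open>Edges of a vertex list\<close>

definition path_edges :: "'v list \<Rightarrow> ('v \<times> 'v) set" where
  "path_edges L = set (zip L (tl L))"

lemma path_edges_conv_nth: "path_edges L = {(L ! i, L ! Suc i) | i. Suc i < length L}"
  unfolding path_edges_def set_zip by (cases L) (auto simp: nth_tl)

lemma path_edges_simps [simp]: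
  "path_edges [] = {}" "path_edges [a] = {}"
  "path_edges (a # b # L) = insert (a, b) (path_edges (b # L))"
  by (auto simp: path_edges_def)

lemma path_edges_append_Cons:
  "path_edges (xs @ y # ys) = path_edges (xs @ [y]) \<union> path_edges (y # ys)"
proof (induction xs)
  case (Cons x xs)
  then show ?case by (cases xs) auto
qed simp

lemma path_edges_take: "path_edges (take n L) \<subseteq> path_edges L"
  by (auto simp: path_edges_conv_nth)

lemma path_edges_drop: "path_edges (drop n L) \<subseteq> path_edges L"
  by (fastforce simp: path_edges_conv_nth)

lemma path_edges_in_set: "(a, b) \<in> path_edges L \<Longrightarrow> a \<in> set L \<and> b \<in> set L"
  by (auto simp: path_edges_conv_nth)

lemma path_points_conv_path_edges:
  "path_points pos \<gamma> L = pos ` set L \<union> (\<Union>e\<in>path_edges L. path_image (\<gamma> e))"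
  unfolding path_points_def path_edges_conv_nth by auto

lemma dipath_iff_path_edges:
  "dipath V E s t L \<longleftrightarrow>
     L \<noteq> [] \<and> hd L = s \<and> last L = t \<and> distinct L \<and> set L \<subseteq> V \<and> path_edges L \<subseteq> E"
  unfolding dipath_def path_edges_conv_nth by auto

lemma dipath_same_ends: "dipath V E s s L \<Longrightarrow> L = [s]"
  unfolding dipath_def by (cases L) (auto dest: last_in_set split: if_splits)

lemma dipath_length: "dipath V E s t L \<Longrightarrow> s \<noteq> t \<Longrightarrow> 2 \<le> length L"
  unfolding dipath_def by (cases L rule: remdups_adj.cases) auto

lemma dipath_segment:
  assumes L: "dipath V E s t L" and jk: "j \<le> k" "k < length L"
  shows "dipath V E (L ! j) (L ! k) (drop j (take (Suc k) L))"
proof -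
  let ?M = "drop j (take (Suc k) L)"
  have "hd ?M = L ! j" "last ?M = L ! k"
    using jk by (simp_all add: hd_drop_conv_nth last_conv_nth)
  moreover have "set ?M \<subseteq> set L"
    by (meson order.trans set_drop_subset set_take_subset)
  moreover have "path_edges ?M \<subseteq> path_edges L"
    by (meson order.trans path_edges_drop path_edges_take)
  ultimately show ?thesis
    using L jk unfolding dipath_iff_path_edges by auto
qed

lemma path_edges_segmentE:
  assumes "e \<in> path_edges (drop j (take (Suc k) L))"
  obtains l where "j \<le> l" "l < k" "Suc l < length L" "e = (L ! l, L ! Suc l)"
proof -
  obtain i where i: "Suc i < min (length L) (Suc k) - j"
    and e: "e = (drop j (take (Suc k) L) ! i, drop j (take (Suc k) L) ! Suc i)"
    using assms by (auto simp: path_edges_conv_nth)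
  have "j \<le> length (take (Suc k) L)" using i by (simp add: min_def split: if_splits)
  with i e have "e = (L ! (j + i), L ! Suc (j + i))" by simp
  with i show thesis by (intro that[of "j + i"]) auto
qed

lemma in_set_segmentE:
  assumes "x \<in> set (drop j (take (Suc k) L))"
  obtains l where "j \<le> l" "l \<le> k" "l < length L" "x = L ! l"
proof -
  obtain i where "i < length (drop j (take (Suc k) L))" "x = drop j (take (Suc k) L) ! i"
    using assms by (auto simp: in_set_conv_nth)
  moreover have "j \<le> length (take (Suc k) L)"
    using calculation(1) by (simp add: min_def split: if_splits)
  ultimately show thesis by (intro that[of "j + i"]) auto
qed

lemma path_edges_segmentI:
  assumes "j \<le> l" "l < k" "k < length L"
  shows "(L ! l, L ! Suc l) \<in> path_edges (drop j (take (Suc k) L))"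
proof -
  have "drop j (take (Suc k) L) ! (l - j) = L ! l"
    "drop j (take (Suc k) L) ! Suc (l - j) = L ! Suc l"
    "Suc (l - j) < length (drop j (take (Suc k) L))"
    using assms by (simp_all add: Suc_diff_le)
  then show ?thesis
    unfolding path_edges_conv_nth by (metis (mono_tags, lifting) mem_Collect_eq)
qed

lemma path_edges_splice:
  assumes "M \<noteq> []" "hd M = P ! a" "last M = P ! b" "a \<le> b" "b < length P"
  shows "path_edges (take a P @ M @ drop (Suc b) P)
           = path_edges (take (Suc a) P) \<union> path_edges M \<union> path_edges (drop b P)"
proof -
  obtain M1 where M1: "M = P ! a # M1"
    using assms(1,2) by (cases M) auto
  obtain M2 where M2: "M = M2 @ [P ! b]"
    using assms(1,3) by (metis append_butlast_last_id)
  have "path_edges (take a P @ M @ drop (Suc b) P)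
          = path_edges (take a P @ [P ! a]) \<union> path_edges (M @ drop (Suc b) P)"
    unfolding M1 append_Cons by (rule path_edges_append_Cons)
  also have "path_edges (M @ drop (Suc b) P) = path_edges M \<union> path_edges (P ! b # drop (Suc b) P)"
    unfolding M2 append_assoc append_Cons append_Nil by (rule path_edges_append_Cons)
  finally show ?thesis
    using assms(4,5) by (simp add: take_Suc_conv_app_nth Cons_nth_drop_Suc Un_assoc)
qed

lemma distinct_splice:
  assumes "distinct P" "distinct M" "a \<le> b" "b < length P"
    and MP: "set M \<inter> set P \<subseteq> {P ! a, P ! b}"
  shows "distinct (take a P @ M @ drop (Suc b) P)"
proof -
  have ends_in_drop: "P ! a \<in> set (drop a P)" "P ! b \<in> set (drop a P)"
    using assms(3,4) nth_mem[of "b - a" "drop a P"] nth_mem[of 0 "drop a P"] by auto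
  have ends_in_take: "P ! a \<in> set (take (Suc b) P)" "P ! b \<in> set (take (Suc b) P)"
    using assms(3,4) nth_mem[of a "take (Suc b) P"] nth_mem[of b "take (Suc b) P"] by auto
  have take_drop_disj: "i \<le> j \<Longrightarrow> set (take i P) \<inter> set (drop j P) = {}" for i j
    by (rule set_take_disj_set_drop_if_distinct[OF assms(1)])
  have "set (take a P) \<inter> set M = {}"
    using MP ends_in_drop take_drop_disj[of a a] set_take_subset[of a P] by blast
  moreover have "set M \<inter> set (drop (Suc b) P) = {}"
    using MP ends_in_take take_drop_disj[of "Suc b" "Suc b"] set_drop_subset[of "Suc b" P] by blast
  moreover have "set (take a P) \<inter> set (drop (Suc b) P) = {}"
    using assms(3) take_drop_disj by simp
  ultimately show ?thesis
    using assms(1,2) by auto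
qed

lemma dipath_splice:
  assumes P: "dipath V E s t P" and M: "dipath V E (P ! a) (P ! b) M"
    and ab: "a \<le> b" "b < length P" and MP: "set M \<inter> set P \<subseteq> {P ! a, P ! b}"
  defines "Q \<equiv> take a P @ M @ drop (Suc b) P"
  shows "dipath V E s t Q"
    and "path_points pos \<gamma> Q \<subseteq> path_points pos \<gamma> P \<union> path_points pos \<gamma> M"
    and "path_points pos \<gamma> M \<subseteq> path_points pos \<gamma> Q"
proof -
  have Pd: "P \<noteq> []" "hd P = s" "last P = t" "distinct P" "set P \<subseteq> V" "path_edges P \<subseteq> E"
    and Md: "M \<noteq> []" "hd M = P ! a" "last M = P ! b" "distinct M" "set M \<subseteq> V" "path_edges M \<subseteq> E"
    using P M unfolding dipath_iff_path_edges by auto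
  have edges_Q: "path_edges Q = path_edges (take (Suc a) P) \<union> path_edges M \<union> path_edges (drop b P)"
    unfolding Q_def using Md(1-3) ab by (rule path_edges_splice)
  have set_Q: "set Q \<subseteq> set P \<union> set M"
    unfolding Q_def using set_take_subset set_drop_subset by fastforce
  have "hd Q = s"
    using Pd(1,2) Md(1,2) unfolding Q_def by (cases a) (auto simp: hd_append hd_conv_nth)
  moreover have "last Q = t"
  proof (cases "Suc b < length P")
    case False
    then have "b = length P - 1" using ab by simp
    then have "P ! b = last P" using Pd(1) by (simp add: last_conv_nth)
    then show ?thesis using False Pd(3) Md(1,3) unfolding Q_def by simp
  qed (use Pd(3) in \<open>simp add: Q_def\<close>)
  ultimately show "dipath V E s t Q"
    using set_Q edges_Q Pd Md path_edges_take[of "Suc a" P] path_edges_drop[of b P]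
      distinct_splice[OF Pd(4) Md(4) ab MP]
    unfolding dipath_iff_path_edges by (auto simp: Q_def)
  show "path_points pos \<gamma> Q \<subseteq> path_points pos \<gamma> P \<union> path_points pos \<gamma> M"
    using set_Q edges_Q path_edges_take[of "Suc a" P] path_edges_drop[of b P]
    unfolding path_points_conv_path_edges by blast
  show "path_points pos \<gamma> M \<subseteq> path_points pos \<gamma> Q"
    using edges_Q unfolding path_points_conv_path_edges Q_def by auto
qed

lemma exists_maximal_gap:
  fixes q :: "nat \<Rightarrow> 'a"
  assumes "q 0 \<in> A" "q n \<in> A" "i < n"
  obtains j k where "j \<le> i" "i < k" "k \<le> n" "q j \<in> A" "q k \<in> A" "\<And>l. j < l \<Longrightarrow> l < k \<Longrightarrow> q l \<notin> A"
proof -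
  define J where "J = {j. j \<le> i \<and> q j \<in> A}"
  define K where "K = {k. i < k \<and> k \<le> n \<and> q k \<in> A}"
  have J: "finite J" "0 \<in> J" and K: "finite K" "n \<in> K"
    using assms unfolding J_def K_def by auto
  have "Max J \<in> J" "Min K \<in> K"
    using J K by (metis Max_in empty_iff, metis Min_in empty_iff)
  then have j: "Max J \<le> i" "q (Max J) \<in> A" and k: "i < Min K" "Min K \<le> n" "q (Min K) \<in> A"
    unfolding J_def K_def by auto
  have "q l \<notin> A" if "Max J < l" "l < Min K" for l
  proof
    assume "q l \<in> A"
    then have "l \<in> J \<or> l \<in> K"
      using that k(2) unfolding J_def K_def by auto
    then show False
      using that Max_ge[OF J(1), of l] Min_le[OF K(1), of l] by linarith
  qed
  then show thesis
    using that[OF j(1) k(1,2) j(2) k(3)] by blast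
qed

lemma iff_Suc_imp_iff_base:
  fixes j k l :: nat
  assumes "\<And>l. j \<le> l \<Longrightarrow> Suc l < k \<Longrightarrow> R l \<longleftrightarrow> R (Suc l)" "j \<le> l" "l < k"
  shows "R l \<longleftrightarrow> R j"
  using assms(2,3)
proof (induction l rule: dec_induct)
  case (step l)
  then show ?case using assms(1) by simp
qed simp

section \<open>Curves of strictly increasing height\<close>

lemma strict_mono_on_joinpaths:
  fixes p q :: "real \<Rightarrow> 'a::topological_space" and f :: "'a \<Rightarrow> 'b::linorder"
  assumes p: "strict_mono_on {0..1} (f \<circ> p)" and q: "strict_mono_on {0..1} (f \<circ> q)"
    and pq: "p 1 = q 0"
  shows "strict_mono_on {0..1} (f \<circ> (p +++ q))"
proof (rule strict_mono_onI)
  fix x y :: real assume xy: "x \<in> {0..1}" "y \<in> {0..1}" "x < y"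
  have p_le: "f (p r) \<le> f (p 1)" if "r \<in> {0..1}" for r
    using that strict_mono_onD[OF p, of r 1] by (cases "r = 1") auto
  have q_ge: "f (q 0) \<le> f (q r)" if "r \<in> {0..1}" for r
    using that strict_mono_onD[OF q, of 0 r] by (cases "r = 0") auto
  show "(f \<circ> (p +++ q)) x < (f \<circ> (p +++ q)) y"
  proof (cases "y \<le> 1/2")
    case True
    then show ?thesis
      using xy strict_mono_onD[OF p, of "2 * x" "2 * y"] by (simp add: joinpaths_def)
  next
    case y: False
    show ?thesis
    proof (cases "x \<le> 1/2")
      case True
      then have "f (p (2 * x)) \<le> f (q 0)" "f (q 0) < f (q (2 * y - 1))"
        using xy y pq p_le[of "2 * x"] strict_mono_onD[OF q, of 0 "2 * y - 1"] by auto
      then show ?thesis using True y by (simp add: joinpaths_def)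
    next
      case False
      then show ?thesis
        using xy y strict_mono_onD[OF q, of "2 * x - 1" "2 * y - 1"] by (simp add: joinpaths_def)
    qed
  qed
qed

lemma y_monotone_path_graph:
  fixes g :: "real \<Rightarrow> real \<times> real"
  assumes g: "path g" and mono: "strict_mono_on {0..1} (snd \<circ> g)"
  obtains f where "continuous_on {snd (pathstart g)..snd (pathfinish g)} f"
    and "path_image g = (\<lambda>v. (f v, v)) ` {snd (pathstart g)..snd (pathfinish g)}"
proof -
  let ?h = "snd \<circ> g"
  let ?I = "{snd (pathstart g)..snd (pathfinish g)}"
  have cont_h: "continuous_on {0..1} ?h"
    using g unfolding path_def by (intro continuous_intros)
  have inj_h: "inj_on ?h {0..1}"
    using mono by (rule strict_mono_on_imp_inj_on)
  have h_image: "?h ` {0..1} = ?I"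
  proof -
    have "?h 0 \<le> ?h r \<and> ?h r \<le> ?h 1" if "r \<in> {0..1}" for r
      using that strict_mono_onD[OF mono, of 0 r] strict_mono_onD[OF mono, of r 1]
      by (cases "r = 0"; cases "r = 1") auto
    moreover have "v \<in> ?h ` {0..1}" if "?h 0 \<le> v" "v \<le> ?h 1" for v
      using IVT'[OF that _ cont_h] by force
    ultimately show ?thesis
      by (auto simp: pathstart_def pathfinish_def)
  qed
  define hi where "hi = the_inv_into {0..1} ?h"
  define f where "f = fst \<circ> g \<circ> hi"
  have cont_hi: "continuous_on ?I hi"
    unfolding hi_def h_image[symmetric] using continuous_on_inv_into[OF cont_h compact_Icc inj_h] .
  have hi_range: "hi ` ?I \<subseteq> {0..1}"
    unfolding hi_def h_image[symmetric] using the_inv_into_into[OF inj_h] by blast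
  have "continuous_on ?I f"
    unfolding f_def using g cont_hi continuous_on_subset[OF _ hi_range] unfolding path_def
    by (intro continuous_on_compose continuous_intros) auto
  moreover have "g r = (f (?h r), ?h r)" if "r \<in> {0..1}" for r
    using that the_inv_into_f_f[OF inj_h, of r] unfolding f_def hi_def by simp
  then have "path_image g = (\<lambda>v. (f v, v)) ` ?h ` {0..1}"
    unfolding path_image_def image_image by (auto simp: image_iff)
  ultimately show thesis
    using that h_image by simp
qed

text \<open>If the curve is the graph of f, then z lies to its right iff fst z - f (snd z) > 0, and this
  continuous function has no zero on C.\<close>

lemma Right_connected:
  fixes g :: "real \<Rightarrow> real \<times> real"
  assumes g: "path g" "strict_mono_on {0..1} (snd \<circ> g)"
    and C: "connected C" "snd ` C \<subseteq> {snd (pathstart g)..snd (pathfinish g)}"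
      "C \<inter> path_image g = {}"
    and p: "p \<in> C" "p \<in> Right (path_image g) (pathstart g) (pathfinish g)" and q: "q \<in> C"
  shows "q \<in> Right (path_image g) (pathstart g) (pathfinish g)"
proof -
  let ?I = "{snd (pathstart g)..snd (pathfinish g)}"
  obtain f where f: "continuous_on ?I f" and image_g: "path_image g = (\<lambda>v. (f v, v)) ` ?I"
    using y_monotone_path_graph[OF g] .
  define \<sigma> where "\<sigma> z = fst z - f (snd z)" for z
  have Right_iff: "z \<in> Right (path_image g) (pathstart g) (pathfinish g) \<longleftrightarrow> 0 < \<sigma> z"
    if "z \<in> C" for z
    using that C(2) unfolding Right_def image_g \<sigma>_def by (cases z) auto
  have "continuous_on C \<sigma>"
    unfolding \<sigma>_def using C(2)
    by (intro continuous_intros continuous_on_compose2[OF f]) auto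
  then have "connected (\<sigma> ` C)"
    using C(1) by (rule connected_continuous_image)
  then have interval: "{\<sigma> q..\<sigma> p} \<subseteq> \<sigma> ` C"
    using p(1) q by (intro connected_contains_Icc) auto
  have "0 \<notin> \<sigma> ` C"
  proof
    assume "0 \<in> \<sigma> ` C"
    then obtain z where "z \<in> C" "fst z = f (snd z)" by (auto simp: \<sigma>_def)
    then have "z \<in> path_image g"
      using C(2) unfolding image_g by (auto intro!: image_eqI[of _ _ "snd z"] prod_eqI)
    with \<open>z \<in> C\<close> C(3) show False by blast
  qed
  moreover have "0 < \<sigma> p"
    using Right_iff p by blast
  ultimately have "0 < \<sigma> q"
    using interval by (meson atLeastAtMost_iff less_imp_le not_less subsetD)
  then show ?thesis
    using Right_iff q by blast
qed

section \<open>Upward planar drawings\<close>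

locale upward_drawing =
  fixes V :: "'v set" and E :: "('v \<times> 'v) set"
    and pos :: "'v \<Rightarrow> real \<times> real" and \<gamma> :: "'v \<times> 'v \<Rightarrow> real \<Rightarrow> real \<times> real"
  assumes drawing: "upward_planar_drawing V E pos \<gamma>"
begin

lemma
  assumes "e \<in> E"
  shows edge_arc: "arc (\<gamma> e)"
    and edge_start: "\<gamma> e 0 = pos (fst e)"
    and edge_finish: "\<gamma> e 1 = pos (snd e)"
    and edge_height_mono: "strict_mono_on {0..1} (snd \<circ> \<gamma> e)"
  using assms drawing unfolding upward_planar_drawing_def pathstart_def pathfinish_def o_def
  by auto

lemma edge_through_vertex:
  "e \<in> E \<Longrightarrow> w \<in> V \<Longrightarrow> pos w \<in> path_image (\<gamma> e) \<Longrightarrow> w = fst e \<or> w = snd e"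
  using drawing unfolding upward_planar_drawing_def by blast

lemma edges_meet_at_common_end:
  "e1 \<in> E \<Longrightarrow> e2 \<in> E \<Longrightarrow> e1 \<noteq> e2 \<Longrightarrow> z \<in> path_image (\<gamma> e1) \<Longrightarrow> z \<in> path_image (\<gamma> e2)
    \<Longrightarrow> z \<in> pos ` ({fst e1, snd e1} \<inter> {fst e2, snd e2})"
  using drawing unfolding upward_planar_drawing_def by blast

lemma edge_ends_in_image:
  "e \<in> E \<Longrightarrow> pos (fst e) \<in> path_image (\<gamma> e) \<and> pos (snd e) \<in> path_image (\<gamma> e)"
  using edge_start edge_finish unfolding path_image_def
  by (metis atLeastAtMost_iff image_eqI order_refl zero_le_one)

lemma edge_height_bounds:
  assumes "(u, w) \<in> E" "r \<in> {0..1}"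
  shows "snd (pos u) \<le> snd (\<gamma> (u, w) r)" "snd (\<gamma> (u, w) r) \<le> snd (pos w)"
  using assms edge_start[OF assms(1)] edge_finish[OF assms(1)]
    strict_mono_onD[OF edge_height_mono[OF assms(1)], of 0 r]
    strict_mono_onD[OF edge_height_mono[OF assms(1)], of r 1]
  by (cases "r = 0"; cases "r = 1"; force)+

lemma edge_height_less: "(u, w) \<in> E \<Longrightarrow> snd (pos u) < snd (pos w)"
  using strict_mono_onD[OF edge_height_mono, of "(u, w)" 0 1] edge_start edge_finish by force

lemma dipath_height_less:
  assumes L: "dipath V E a b L" and "i < j" "j < length L"
  shows "snd (pos (L ! i)) < snd (pos (L ! j))"
  using assms(2,3)
proof (induction j)
  case (Suc j)
  have "snd (pos (L ! j)) < snd (pos (L ! Suc j))"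
    using L Suc.prems(2) unfolding dipath_def by (blast intro: edge_height_less)
  with Suc show ?case by (cases "i = j") auto
qed simp

lemma path_points_eq_edge_images:
  assumes "2 \<le> length L" "path_edges L \<subseteq> E"
  shows "path_points pos \<gamma> L = (\<Union>e\<in>path_edges L. path_image (\<gamma> e))"
proof -
  have "pos x \<in> (\<Union>e\<in>path_edges L. path_image (\<gamma> e))" if "x \<in> set L" for x
  proof -
    obtain i where i: "i < length L" "x = L ! i" using \<open>x \<in> set L\<close> by (auto simp: in_set_conv_nth)
    show ?thesis
    proof (cases "Suc i < length L")
      case True
      then have "(x, L ! Suc i) \<in> path_edges L" using i by (auto simp: path_edges_conv_nth)
      then show ?thesis using assms(2) edge_ends_in_image by fastforce
    next
      case False
      then have "(L ! (i - 1), x) \<in> path_edges L"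
        using i assms(1) by (auto simp: path_edges_conv_nth intro!: exI[of _ "i - 1"])
      then show ?thesis using assms(2) edge_ends_in_image by fastforce
    qed
  qed
  then show ?thesis unfolding path_points_conv_path_edges by blast
qed

lemma y_monotone_curve_through_path:
  assumes "2 \<le> length L" "path_edges L \<subseteq> E"
  shows "\<exists>g. path g \<and> pathstart g = pos (hd L) \<and> pathfinish g = pos (last L)
           \<and> strict_mono_on {0..1} (snd \<circ> g) \<and> path_image g = path_points pos \<gamma> L"
  using assms
proof (induction L)
  case (Cons a L)
  then obtain b L' where L: "L = b # L'" by (cases L) auto
  have ab: "(a, b) \<in> E" using Cons.prems(2) L by simp
  have image_ab: "path_image (\<gamma> (a, b)) = path_points pos \<gamma> [a, b]"
    using ab by (simp add: path_points_eq_edge_images)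
  show ?case
  proof (cases "L' = []")
    case True
    then show ?thesis
      using ab image_ab L edge_arc edge_start edge_finish edge_height_mono[OF ab, unfolded o_def]
      by (auto intro!: exI[of _ "\<gamma> (a, b)"] arc_imp_path simp: pathstart_def pathfinish_def)
  next
    case False
    then have L2: "2 \<le> length L" "path_edges L \<subseteq> E"
      using Cons.prems(2) L by (auto simp: Suc_le_eq)
    then obtain g where g: "path g" "pathstart g = pos b" "pathfinish g = pos (last L)"
      "strict_mono_on {0..1} (snd \<circ> g)" "path_image g = path_points pos \<gamma> L"
      using Cons.IH L by (simp only: list.sel) blast
    have joint: "pathfinish (\<gamma> (a, b)) = pathstart g"
      using g(2) edge_finish[OF ab] by (simp add: pathfinish_def)
    have "path_points pos \<gamma> (a # L) = path_image (\<gamma> (a, b)) \<union> path_points pos \<gamma> L"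
      using Cons.prems L L2 by (simp add: path_points_eq_edge_images)
    moreover have "strict_mono_on {0..1} (snd \<circ> (\<gamma> (a, b) +++ g))"
      using joint by (intro strict_mono_on_joinpaths edge_height_mono[OF ab] g(4))
        (simp add: pathstart_def pathfinish_def)
    ultimately show ?thesis
      using g joint L edge_arc[OF ab] edge_start[OF ab]
      by (intro exI[of _ "\<gamma> (a, b) +++ g"])
        (simp_all add: path_image_join arc_imp_path pathstart_def[of "\<gamma> _"] o_def)
  qed
qed simp

lemma vertex_in_path_points_iff:
  assumes "w \<in> V" "set L \<subseteq> V" "path_edges L \<subseteq> E"
  shows "pos w \<in> path_points pos \<gamma> L \<longleftrightarrow> w \<in> set L"
proof
  assume "pos w \<in> path_points pos \<gamma> L"
  then consider "pos w \<in> pos ` set L" | e where "e \<in> path_edges L" "pos w \<in> path_image (\<gamma> e)"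
    unfolding path_points_conv_path_edges by blast
  then show "w \<in> set L"
  proof cases
    case 1
    with assms(1,2) drawing show ?thesis
      unfolding upward_planar_drawing_def by (auto dest: inj_onD)
  next
    case 2
    then show ?thesis
      using assms edge_through_vertex path_edges_in_set[of "fst e" "snd e" L] by fastforce
  qed
qed (auto simp: path_points_conv_path_edges)

lemma edge_meets_path_at_end:
  assumes e: "e \<in> E" "e \<notin> path_edges L" and L: "set L \<subseteq> V" "path_edges L \<subseteq> E"
    and r: "r \<in> {0..1}" "\<gamma> e r \<in> path_points pos \<gamma> L"
  shows "r = 0 \<and> fst e \<in> set L \<or> r = 1 \<and> snd e \<in> set L"
proof -
  have on_e: "\<gamma> e r \<in> path_image (\<gamma> e)"
    using r(1) unfolding path_image_def by blast
  obtain w where w: "w \<in> set L" "w = fst e \<or> w = snd e" "\<gamma> e r = pos w"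
  proof -
    consider w where "w \<in> set L" "\<gamma> e r = pos w"
      | e' where "e' \<in> path_edges L" "\<gamma> e r \<in> path_image (\<gamma> e')"
      using r(2) unfolding path_points_conv_path_edges by blast
    then show thesis
    proof cases
      case 1
      then show thesis using that edge_through_vertex[OF e(1)] on_e L(1) by (metis subsetD)
    next
      case (2 e')
      then have "\<gamma> e r \<in> pos ` ({fst e, snd e} \<inter> {fst e', snd e'})"
        using edges_meet_at_common_end[OF e(1)] e(2) L(2) on_e by blast
      then show thesis
        using that 2(1) path_edges_in_set[of "fst e'" "snd e'" L] by auto
    qed
  qed
  have "inj_on (\<gamma> e) {0..1}" using edge_arc[OF e(1)] unfolding arc_def by blast
  moreover have "\<gamma> e r = \<gamma> e 0 \<and> w = fst e \<or> \<gamma> e r = \<gamma> e 1 \<and> w = snd e"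
    using w edge_start[OF e(1)] edge_finish[OF e(1)] by auto
  ultimately show ?thesis
    using w(1) r(1) by (auto dest: inj_onD)
qed

end

section \<open>The right side of an s-t path\<close>

locale upward_st_path = upward_drawing V E pos \<gamma>
  for V :: "'v set" and E pos \<gamma> +
  fixes s t :: 'v and P :: "'v list"
  assumes P: "dipath V E s t P" and ends_distinct: "s \<noteq> t"
begin

abbreviation "P_points \<equiv> path_points pos \<gamma> P"

abbreviation "right_of_P \<equiv> Right P_points (pos s) (pos t)"

text \<open>By edge_point_in_right_iff any point of an edge off P would do instead of the midpoint.\<close>

definition right_edge :: "'v \<times> 'v \<Rightarrow> bool" where
  "right_edge e \<longleftrightarrow> \<gamma> e (1/2) \<in> right_of_P"

lemma P_points_disjoint_right: "P_points \<inter> right_of_P = {}"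
  unfolding Right_def by auto

lemma connected_right_of_P:
  assumes "connected C" "snd ` C \<subseteq> {snd (pos s)..snd (pos t)}" "C \<inter> P_points = {}"
    and "p \<in> C" "p \<in> right_of_P" "z \<in> C"
  shows "z \<in> right_of_P"
proof -
  have "2 \<le> length P" "path_edges P \<subseteq> E" "hd P = s" "last P = t"
    using P ends_distinct dipath_length[OF P] unfolding dipath_iff_path_edges by auto
  then obtain g where "path g" "pathstart g = pos s" "pathfinish g = pos t"
    "strict_mono_on {0..1} (snd \<circ> g)" "path_image g = P_points"
    using y_monotone_curve_through_path by metis
  then show ?thesis
    using Right_connected[of g C p z] assms by simp
qed

lemma dipath_height_between:
  assumes L: "dipath V E s t L" and "x \<in> set L"
  shows "snd (pos x) \<in> {snd (pos s)..snd (pos t)}"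
proof -
  obtain i where i: "i < length L" "x = L ! i"
    using assms(2) by (auto simp: in_set_conv_nth)
  have "L \<noteq> []" "s = L ! 0" "t = L ! (length L - 1)"
    using L unfolding dipath_def by (auto simp: hd_conv_nth last_conv_nth)
  then show ?thesis
    using i dipath_height_less[OF L, of 0 i] dipath_height_less[OF L, of i "length L - 1"]
    by (cases "i = 0"; cases "i = length L - 1") (auto simp: less_imp_le)
qed

lemma edge_height_between:
  assumes L: "dipath V E s t L" and e: "e \<in> path_edges L" and r: "r \<in> {0..1}"
  shows "snd (\<gamma> e r) \<in> {snd (pos s)..snd (pos t)}"
proof -
  obtain u w where uw: "e = (u, w)" "u \<in> set L" "w \<in> set L" "e \<in> E"
    using e L path_edges_in_set unfolding dipath_iff_path_edges by (metis subsetD surj_pair)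
  then show ?thesis
    using dipath_height_between[OF L] edge_height_bounds[of u w r] r by fastforce
qed

text \<open>The inner points of an edge off P together with one further point of it off P form a
  connected set missing P.\<close>

lemma edge_point_in_right_iff:
  assumes L: "dipath V E s t L" and e: "e \<in> path_edges L" "e \<notin> path_edges P"
    and r: "r \<in> {0..1}" "\<gamma> e r \<notin> P_points"
  shows "\<gamma> e r \<in> right_of_P \<longleftrightarrow> right_edge e"
proof -
  have eE: "e \<in> E" using L e(1) unfolding dipath_iff_path_edges by auto
  define T where "T = insert r {0<..<1::real}"
  have T: "T \<subseteq> {0..1}" "r \<in> T" "1/2 \<in> T"
    using r(1) by (auto simp: T_def)
  have "connected T"
  proof (rule connected_intermediate_closure)
    show "connected {0<..<1::real}" by simp
    show "{0<..<1} \<subseteq> T" "T \<subseteq> closure {0<..<1}"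
      using r(1) by (auto simp: T_def)
  qed
  moreover have "continuous_on {0..1} (\<gamma> e)"
    using edge_arc[OF eE] unfolding arc_def path_def by blast
  ultimately have "connected (\<gamma> e ` T)"
    using T(1) by (metis connected_continuous_image continuous_on_subset)
  moreover have "snd ` \<gamma> e ` T \<subseteq> {snd (pos s)..snd (pos t)}"
    using edge_height_between[OF L e(1)] T(1) by blast
  moreover have "\<gamma> e ` T \<inter> P_points = {}"
  proof -
    have "\<gamma> e r' \<notin> P_points" if "r' \<in> {0<..<1}" for r'
      using that edge_meets_path_at_end[OF eE e(2), of r'] P unfolding dipath_iff_path_edges by auto
    then show ?thesis using r(2) unfolding T_def by blast
  qed
  ultimately show ?thesis
    using T(2,3) connected_right_of_P unfolding right_edge_def by blast
qed

lemma right_edge_image_subset: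
  assumes "dipath V E s t L" "e \<in> path_edges L" "e \<notin> path_edges P" "right_edge e"
  shows "path_image (\<gamma> e) \<subseteq> P_points \<union> right_of_P"
  using edge_point_in_right_iff[OF assms(1-3)] assms(4) unfolding path_image_def by blast

lemma right_edge_iff_at_vertex:
  assumes L: "dipath V E s t L" and uw: "(u, w) \<in> path_edges L" and wx: "(w, x) \<in> path_edges L"
    and w: "w \<notin> set P"
  shows "right_edge (u, w) \<longleftrightarrow> right_edge (w, x)"
proof -
  have "(u, w) \<in> E" "(w, x) \<in> E" "w \<in> V"
    using L uw wx path_edges_in_set[OF uw] unfolding dipath_iff_path_edges by auto
  then have ends: "\<gamma> (u, w) 1 = pos w" "\<gamma> (w, x) 0 = pos w"
    using edge_start edge_finish by auto
  have "pos w \<notin> P_points"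
    using vertex_in_path_points_iff[of w P] w P \<open>w \<in> V\<close> unfolding dipath_iff_path_edges by blast
  moreover have "(u, w) \<notin> path_edges P" "(w, x) \<notin> path_edges P"
    using w path_edges_in_set[of _ _ P] by blast+
  ultimately have "right_edge (u, w) \<longleftrightarrow> pos w \<in> right_of_P" "right_edge (w, x) \<longleftrightarrow> pos w \<in> right_of_P"
    using edge_point_in_right_iff[OF L uw, of 1] edge_point_in_right_iff[OF L wx, of 0] ends
    by auto
  then show ?thesis by simp
qed

lemma exists_right_edge:
  assumes L: "dipath V E s t L" and meets: "path_points pos \<gamma> L \<inter> right_of_P \<noteq> {}"
  obtains e where "e \<in> path_edges L" "e \<notin> path_edges P" "right_edge e"
proof -
  have "path_points pos \<gamma> L = (\<Union>e\<in>path_edges L. path_image (\<gamma> e))"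
    using L dipath_length[OF L ends_distinct]
    by (intro path_points_eq_edge_images) (auto simp: dipath_iff_path_edges)
  moreover obtain z where z: "z \<in> path_points pos \<gamma> L" "z \<in> right_of_P"
    using meets by blast
  ultimately obtain e where e: "e \<in> path_edges L" "z \<in> path_image (\<gamma> e)"
    by blast
  then obtain r where r: "r \<in> {0..1}" "z = \<gamma> e r"
    unfolding path_image_def by blast
  have "\<gamma> e r \<notin> P_points"
    using z(2) r(2) P_points_disjoint_right by blast
  moreover have "e \<notin> path_edges P"
    using calculation e(2) r(2) unfolding path_points_conv_path_edges by blast
  ultimately show thesis
    using that e(1) edge_point_in_right_iff[OF L e(1) _ r(1)] z(2) r(2) by blast
qed

lemma right_edges_between:
  assumes L: "dipath V E s t L" and jik: "j \<le> i" "i < k" "k < length L"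
    and gap: "\<And>l. j < l \<Longrightarrow> l < k \<Longrightarrow> L ! l \<notin> set P"
    and i: "(L ! i, L ! Suc i) \<notin> path_edges P" "right_edge (L ! i, L ! Suc i)"
    and l: "j \<le> l" "l < k"
  shows "(L ! l, L ! Suc l) \<notin> path_edges P" "right_edge (L ! l, L ! Suc l)"
proof -
  have edge: "(L ! l, L ! Suc l) \<in> path_edges L" if "l < k" for l
    using that jik(3) by (auto simp: path_edges_conv_nth)
  show "(L ! l, L ! Suc l) \<notin> path_edges P"
  proof (cases l i rule: linorder_cases)
    case less
    then show ?thesis using gap[of "Suc l"] l jik path_edges_in_set[of _ _ P] by auto
  next
    case greater
    then show ?thesis using gap[of l] l jik path_edges_in_set[of _ _ P] by auto
  qed (use i in simp)
  have "right_edge (L ! m, L ! Suc m) \<longleftrightarrow> right_edge (L ! Suc m, L ! Suc (Suc m))"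
    if "j \<le> m" "Suc m < k" for m
    using right_edge_iff_at_vertex[OF L edge edge gap] that by auto
  then show "right_edge (L ! l, L ! Suc l)"
    using iff_Suc_imp_iff_base[of j k "\<lambda>l. right_edge (L ! l, L ! Suc l)"] i(2) jik l by blast
qed

text \<open>Starting from an edge of L on the right of P, walk backwards and forwards along L
  until L returns to P; every edge passed lies on the right of P.\<close>

lemma right_excursion:
  assumes L: "dipath V E s t L" and meets: "path_points pos \<gamma> L \<inter> right_of_P \<noteq> {}"
  obtains j k where "j < k" "k < length L" "L ! j \<in> set P" "L ! k \<in> set P"
    "\<And>l. j < l \<Longrightarrow> l < k \<Longrightarrow> L ! l \<notin> set P"
    "\<And>l. j \<le> l \<Longrightarrow> l < k
      \<Longrightarrow> (L ! l, L ! Suc l) \<notin> path_edges P \<and> right_edge (L ! l, L ! Suc l)"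
proof -
  obtain i where i: "Suc i < length L" "(L ! i, L ! Suc i) \<notin> path_edges P"
    "right_edge (L ! i, L ! Suc i)"
    using exists_right_edge[OF L meets] unfolding path_edges_conv_nth by blast
  have "L ! 0 = s" "L ! (length L - 1) = t"
    using L unfolding dipath_def by (auto simp: hd_conv_nth last_conv_nth)
  moreover have "s \<in> set P" "t \<in> set P"
    using P unfolding dipath_def by auto
  ultimately have ends: "L ! 0 \<in> set P" "L ! (length L - 1) \<in> set P"
    by simp_all
  have "i < length L - 1"
    using i(1) by simp
  then obtain j k where jik: "j \<le> i" "i < k" "k \<le> length L - 1"
    and on_P: "L ! j \<in> set P" "L ! k \<in> set P"
    and gap: "\<And>l. j < l \<Longrightarrow> l < k \<Longrightarrow> L ! l \<notin> set P"
    using exists_maximal_gap[of "(!) L", OF ends] by blast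
  then have jik: "j \<le> i" "i < k" "k < length L"
    by auto
  show thesis
  proof (rule that)
    show "j < k" "k < length L" using jik by auto
  qed (use on_P gap right_edges_between[OF L jik gap i(2,3)] in auto)
qed

lemma excursion_points:
  assumes L: "dipath V E s t L" and jk: "j < k" "k < length L"
    and right: "\<And>l. j \<le> l \<Longrightarrow> l < k
      \<Longrightarrow> (L ! l, L ! Suc l) \<notin> path_edges P \<and> right_edge (L ! l, L ! Suc l)"
  defines "M \<equiv> drop j (take (Suc k) L)"
  shows "path_points pos \<gamma> M \<subseteq> P_points \<union> right_of_P" "path_points pos \<gamma> M \<inter> right_of_P \<noteq> {}"
proof -
  have M: "dipath V E (L ! j) (L ! k) M"
    unfolding M_def using L jk by (intro dipath_segment) auto
  have "path_points pos \<gamma> M = (\<Union>e\<in>path_edges M. path_image (\<gamma> e))"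
  proof (rule path_points_eq_edge_images)
    have "L ! j \<noteq> L ! k"
      using L jk unfolding dipath_def by (simp add: nth_eq_iff_index_eq)
    then show "2 \<le> length M"
      using dipath_length[OF M] by blast
    show "path_edges M \<subseteq> E"
      using M unfolding dipath_iff_path_edges by blast
  qed
  moreover have "path_image (\<gamma> e) \<subseteq> P_points \<union> right_of_P" if e: "e \<in> path_edges M" for e
  proof -
    obtain l where "j \<le> l" "l < k" "Suc l < length L" "e = (L ! l, L ! Suc l)"
      using e unfolding M_def by (rule path_edges_segmentE)
    moreover have "(L ! l, L ! Suc l) \<in> path_edges L"
      using calculation(3) by (auto simp: path_edges_conv_nth)
    ultimately show ?thesis
      using right right_edge_image_subset[OF L] by simp
  qed
  ultimately show "path_points pos \<gamma> M \<subseteq> P_points \<union> right_of_P"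
    by blast
  have "\<gamma> (L ! j, L ! Suc j) (1/2) \<in> path_points pos \<gamma> M"
    using path_edges_segmentI[of j j k L] jk
    unfolding M_def path_points_conv_path_edges path_image_def by fastforce
  then show "path_points pos \<gamma> M \<inter> right_of_P \<noteq> {}"
    using right[of j] jk unfolding right_edge_def by blast
qed

lemma right_detour:
  assumes L: "dipath V E s t L" and meets: "path_points pos \<gamma> L \<inter> right_of_P \<noteq> {}"
  obtains a b M where "a < b" "b < length P" "dipath V E (P ! a) (P ! b) M"
    "set M \<inter> set P \<subseteq> {P ! a, P ! b}" "path_points pos \<gamma> M \<subseteq> P_points \<union> right_of_P"
    "path_points pos \<gamma> M \<inter> right_of_P \<noteq> {}"
proof -
  obtain j k where jk: "j < k" "k < length L" and on_P: "L ! j \<in> set P" "L ! k \<in> set P"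
    and gap: "\<And>l. j < l \<Longrightarrow> l < k \<Longrightarrow> L ! l \<notin> set P"
    and right: "\<And>l. j \<le> l \<Longrightarrow> l < k
      \<Longrightarrow> (L ! l, L ! Suc l) \<notin> path_edges P \<and> right_edge (L ! l, L ! Suc l)"
    using right_excursion[OF L meets] by blast
  define M where "M = drop j (take (Suc k) L)"
  obtain a b where a: "a < length P" "P ! a = L ! j" and b: "b < length P" "P ! b = L ! k"
    using on_P by (metis in_set_conv_nth)
  have "snd (pos (P ! a)) < snd (pos (P ! b))"
    using a(2) b(2) dipath_height_less[OF L jk] by simp
  then have "a < b"
    using dipath_height_less[OF P, of b a] a(1) by (cases a b rule: linorder_cases) auto
  moreover have "dipath V E (P ! a) (P ! b) M"
    unfolding M_def a(2) b(2) using L jk by (intro dipath_segment) auto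
  moreover have "set M \<inter> set P \<subseteq> {P ! a, P ! b}"
  proof
    fix x assume x: "x \<in> set M \<inter> set P"
    then obtain l where "j \<le> l" "l \<le> k" "x = L ! l"
      unfolding M_def by (blast elim: in_set_segmentE)
    then show "x \<in> {P ! a, P ! b}"
      using x gap[of l] a(2) b(2) by (cases "l = j \<or> l = k") auto
  qed
  ultimately show thesis
    using that b(1) excursion_points[OF L jk right] unfolding M_def by blast
qed

end

theorem lemma9:
  fixes V :: "'v set" and E :: "('v \<times> 'v) set"
    and pos :: "'v \<Rightarrow> real \<times> real" and \<gamma> :: "'v \<times> 'v \<Rightarrow> real \<Rightarrow> real \<times> real"
    and s t :: 'v and P P' :: "'v list"
  assumes "digraph V E"
    and "upward_planar_drawing V E pos \<gamma>"
    and "s \<in> V" and "t \<in> V"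
    and "dipath V E s t P"
    and "dipath V E s t P'"
    and "path_points pos \<gamma> P' \<inter> Right (path_points pos \<gamma> P) (pos s) (pos t) \<noteq> {}"
  shows "\<exists>Q. dipath V E s t Q \<and>
           path_points pos \<gamma> Q \<subseteq> path_points pos \<gamma> P \<union> Right (path_points pos \<gamma> P) (pos s) (pos t) \<and>
           path_points pos \<gamma> Q \<inter> Right (path_points pos \<gamma> P) (pos s) (pos t) \<noteq> {}"
proof (cases "s = t")
  case True
  then have "P' = P"
    using assms(5,6) dipath_same_ends by metis
  then show ?thesis
    using assms(7) unfolding Right_def by auto
next
  case False
  then interpret upward_st_path V E pos \<gamma> s t P
    using assms(2,5) by unfold_locales
  obtain a b M where ab: "a < b" "b < length P" and M: "dipath V E (P ! a) (P ! b) M"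
    and MP: "set M \<inter> set P \<subseteq> {P ! a, P ! b}"
    and right: "path_points pos \<gamma> M \<subseteq> P_points \<union> right_of_P" "path_points pos \<gamma> M \<inter> right_of_P \<noteq> {}"
    using right_detour[OF assms(6,7)] by blast
  note splice = dipath_splice[OF assms(5) M less_imp_le[OF ab(1)] ab(2) MP]
  show ?thesis
    using splice right by (intro exI[of _ "take a P @ M @ drop (Suc b) P"]) blast
qed

end
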